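(* Let $0<p<1$, $q=1-p$, and let $c$ be the circle centered at the origin with radius $r$, $0<r<\frac{-1+\sqrt{1+4pq}}{2q}$. Let $X=(x_1,\dots,x_N)$, $Y=(y_1,\dots,y_N)\in\mathbb{Z}^N$ with $x_1<\cdots<x_N$, $y_1<\cdots<y_N$ and $x_i\ge y_i$ for all $i$. Let $\sigma\in S_N$, $\sigma\neq\mathrm{Id}$, and for each inversion $(\beta,\alpha)$ of $\sigma$ choose $E_{\beta\alpha}$ to be one of $S_{\beta\alpha},P_{\beta\alpha},Q_{\beta\alpha},pT_{\beta\alpha},qT_{\beta\alpha},0$. Then $$\int_c\cdots\int_c\Big(\prod_{(\beta,\alpha)}E_{\beta\alpha}\Big)\prod_{i=1}^N\xi_{\sigma(i)}^{x_i-y_{\sigma(i)}-1}\,d\xi_1\cdots d\xi_N=0,$$ where the product is over all inversions $(\beta,\alpha)$ of $\sigma$.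
   Context: An inversion of $\sigma$ is a pair $(\beta,\alpha)$ with $\beta>\alpha$ such that $\beta$ appears to the left of $\alpha$ in the word $\sigma(1)\cdots\sigma(N)$. For nonzero complex $\xi_\alpha,\xi_\beta$, with $D=p+q\xi_\alpha\xi_\beta-\xi_\alpha$: $S_{\beta\alpha}=-\frac{p+q\xi_\alpha\xi_\beta-\xi_\beta}{D}$, $P_{\beta\alpha}=\frac{(p-q\xi_\alpha)(\xi_\beta-1)}{D}$, $Q_{\beta\alpha}=\frac{(p-q\xi_\beta)(\xi_\alpha-1)}{D}$, $T_{\beta\alpha}=\frac{\xi_\beta-\xi_\alpha}{D}$. *)

theory Defs
  imports "HOL-Complex_Analysis.Complex_Analysis" "HOL-Combinatorics.Permutations"
begin

definition inversions :: "(nat \<Rightarrow> nat) \<Rightarrow> nat \<Rightarrow> (nat \<times> nat) set" where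
  "inversions \<sigma> N = {(\<beta>, \<alpha>). \<exists>i j. 1 \<le> i \<and> i < j \<and> j \<le> N \<and> \<sigma> i = \<beta> \<and> \<sigma> j = \<alpha> \<and> \<alpha> < \<beta>}"

definition Dden :: "real \<Rightarrow> real \<Rightarrow> complex \<Rightarrow> complex \<Rightarrow> complex" where
  "Dden p q xa xb = of_real p + of_real q * xa * xb - xa"

definition Sfac :: "real \<Rightarrow> real \<Rightarrow> complex \<Rightarrow> complex \<Rightarrow> complex" where
  "Sfac p q xa xb = - (of_real p + of_real q * xa * xb - xb) / Dden p q xa xb"

definition Pfac :: "real \<Rightarrow> real \<Rightarrow> complex \<Rightarrow> complex \<Rightarrow> complex" where
  "Pfac p q xa xb = (of_real p - of_real q * xa) * (xb - 1) / Dden p q xa xb"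

definition Qfac :: "real \<Rightarrow> real \<Rightarrow> complex \<Rightarrow> complex \<Rightarrow> complex" where
  "Qfac p q xa xb = (of_real p - of_real q * xb) * (xa - 1) / Dden p q xa xb"

definition Tfac :: "real \<Rightarrow> real \<Rightarrow> complex \<Rightarrow> complex \<Rightarrow> complex" where
  "Tfac p q xa xb = (xb - xa) / Dden p q xa xb"

datatype echoice = ChS | ChP | ChQ | ChpT | ChqT | ChZero

text \<open>E_{beta alpha} as a function of xi_alpha (xa) and xi_beta (xb).\<close>
fun Efac :: "real \<Rightarrow> real \<Rightarrow> echoice \<Rightarrow> complex \<Rightarrow> complex \<Rightarrow> complex" where
  "Efac p q ChS xa xb = Sfac p q xa xb"
| "Efac p q ChP xa xb = Pfac p q xa xb"
| "Efac p q ChQ xa xb = Qfac p q xa xb"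
| "Efac p q ChpT xa xb = of_real p * Tfac p q xa xb"
| "Efac p q ChqT xa xb = of_real q * Tfac p q xa xb"
| "Efac p q ChZero xa xb = 0"

text \<open>Iterated contour integral over the counterclockwise circle of radius r centred at 0
  in the variables xi_1, ..., xi_n (xi_1 innermost, xi_n outermost).\<close>
fun iter_cint :: "real \<Rightarrow> nat \<Rightarrow> ((nat \<Rightarrow> complex) \<Rightarrow> complex) \<Rightarrow> complex" where
  "iter_cint r 0 F = F (\<lambda>_. 0)"
| "iter_cint r (Suc n) F =
     contour_integral (circlepath 0 r) (\<lambda>z. iter_cint r n (\<lambda>\<xi>. F (\<xi>(Suc n := z))))"

end

theory Submission
  imports Defs
begin

text \<open>Let \<open>k\<close> be the least index moved by \<open>\<sigma>\<close> and \<open>\<sigma>(i) = k\<close>. Then \<open>i > k\<close>, so \<open>\<xi>\<^sub>k\<close> occurs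
  with exponent \<open>x\<^sub>i - y\<^sub>k - 1 \<ge> x\<^sub>k - y\<^sub>k \<ge> 0\<close>. The variables \<open>\<xi>\<^sub>1, \<dots>, \<xi>\<^sub>k\<^sub>-\<^sub>1\<close> are fixed by \<open>\<sigma>\<close>
  and occur in no inversion, so the integrand is a monomial in them times a function of
  \<open>\<xi>\<^sub>k, \<dots>, \<xi>\<^sub>N\<close>. The latter is holomorphic in \<open>\<xi>\<^sub>k\<close> on the closed disc of radius \<open>r\<close>, because
  \<open>|D| \<ge> p - r - q r\<^sup>2 > 0\<close> there by the choice of \<open>r\<close>; so its \<open>\<xi>\<^sub>k\<close>-integral vanishes by
  Cauchy's theorem, and with it the whole iterated integral.\<close>

lemma contour_integral_mult_left:
  "contour_integral g (\<lambda>x. f x * c) = contour_integral g f * c"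
proof (cases "c = 0 \<or> f contour_integrable_on g")
  case True
  then show ?thesis by (auto intro: contour_integral_rmul)
next
  case False
  then show ?thesis
    by (simp add: contour_integrable_rmul_iff not_integrable_contour_integral)
qed

lemma contour_integral_mult_right:
  "contour_integral g (\<lambda>x. c * f x) = c * contour_integral g f"
  using contour_integral_mult_left[of g f c] by (simp add: mult.commute)

lemma iter_cint_mult_left: "iter_cint r n (\<lambda>\<xi>. f \<xi> * c) = iter_cint r n f * c"
  by (induction n arbitrary: f) (simp_all add: contour_integral_mult_left)

lemma iter_cint_cong:
  assumes "\<And>\<xi>. (\<forall>j. j \<notin> {1..n} \<longrightarrow> \<xi> j = 0) \<Longrightarrow> f \<xi> = g \<xi>"
  shows "iter_cint r n f = iter_cint r n g"
  using assms
proof (induction n arbitrary: f g)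
  case 0
  then show ?case using "0"[of "\<lambda>_. 0"] by simp
next
  case (Suc n)
  have "iter_cint r n (\<lambda>\<xi>. f (\<xi>(Suc n := z))) = iter_cint r n (\<lambda>\<xi>. g (\<xi>(Suc n := z)))" for z
    by (rule Suc.IH, rule Suc.prems) auto
  then show ?case by simp
qed

lemma iter_cint_Suc_separated:
  assumes "\<And>\<xi> z. A (\<xi>(Suc n := z)) = A \<xi>"
  shows "iter_cint r (Suc n) (\<lambda>\<xi>. A \<xi> * g (\<xi> (Suc n)))
           = iter_cint r n A * contour_integral (circlepath 0 r) g"
  by (simp add: assms iter_cint_mult_left contour_integral_mult_right)

lemma iter_cint_eq_0_from_level:
  assumes "k \<le> n" and "0 \<le> r"
    and "\<And>\<xi>. \<forall>j. norm (\<xi> j) \<le> r \<Longrightarrow>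
           iter_cint r k (\<lambda>\<eta>. F (\<lambda>j. if j \<le> k then \<eta> j else \<xi> j)) = 0"
  shows "iter_cint r n F = 0"
  using assms(1,3)
proof (induction n arbitrary: F rule: dec_induct)
  case base
  have "iter_cint r k F = iter_cint r k (\<lambda>\<eta>. F (\<lambda>j. if j \<le> k then \<eta> j else 0))"
    by (rule iter_cint_cong) (metis atLeastAtMost_iff not_less_eq_eq)
  also have "\<dots> = 0"
    using base[of "\<lambda>_. 0"] \<open>0 \<le> r\<close> by simp
  finally show ?case .
next
  case (step m)
  show ?case
    unfolding iter_cint.simps
  proof (rule contour_integral_eq_0)
    fix z assume "z \<in> path_image (circlepath 0 r)"
    then have "norm z = r" using \<open>0 \<le> r\<close> by simp
    show "iter_cint r m (\<lambda>\<xi>. F (\<xi>(Suc m := z))) = 0"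
    proof (rule step.IH)
      fix \<xi> :: "nat \<Rightarrow> complex"
      assume "\<forall>j. norm (\<xi> j) \<le> r"
      with \<open>norm z = r\<close> have "\<forall>j. norm ((\<xi>(Suc m := z)) j) \<le> r" by simp
      moreover have "(\<lambda>j. if j \<le> k then \<eta> j else \<xi> j)(Suc m := z)
          = (\<lambda>j. if j \<le> k then \<eta> j else (\<xi>(Suc m := z)) j)" for \<eta> :: "nat \<Rightarrow> complex"
        using \<open>k \<le> m\<close> by auto
      ultimately show "iter_cint r k (\<lambda>\<eta>. F ((\<lambda>j. if j \<le> k then \<eta> j else \<xi> j)(Suc m := z))) = 0"
        using step.prems by presburger
    qed
  qed
qed

text \<open>No Fubini argument is needed although \<open>\<xi>\<^sub>k\<close> is not the innermost variable: the inner
  integrals only see \<open>A\<close>, which is independent of \<open>\<xi>\<^sub>k\<close>, so they contribute a constant factor.\<close>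

lemma iter_cint_eq_0_if_separated:
  assumes "1 \<le> k" "k \<le> n" "0 \<le> r"
    and factor: "\<And>\<xi>. F \<xi> = A \<xi> * G \<xi>"
    and A_cong: "\<And>\<xi> \<xi>'. \<forall>j<k. \<xi> j = \<xi>' j \<Longrightarrow> A \<xi> = A \<xi>'"
    and G_cong: "\<And>\<xi> \<xi>'. \<forall>j\<ge>k. \<xi> j = \<xi>' j \<Longrightarrow> G \<xi> = G \<xi>'"
    and vanish: "\<And>\<xi>. \<forall>j. norm (\<xi> j) \<le> r \<Longrightarrow>
                   contour_integral (circlepath 0 r) (\<lambda>z. G (\<xi>(k := z))) = 0"
  shows "iter_cint r n F = 0"
proof (rule iter_cint_eq_0_from_level[OF \<open>k \<le> n\<close> \<open>0 \<le> r\<close>])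
  fix \<xi> :: "nat \<Rightarrow> complex"
  assume bounded: "\<forall>j. norm (\<xi> j) \<le> r"
  obtain m where k: "k = Suc m" using \<open>1 \<le> k\<close> by (cases k) auto
  have "F (\<lambda>j. if j \<le> k then \<eta> j else \<xi> j) = A \<eta> * G (\<xi>(k := \<eta> k))" for \<eta>
    unfolding factor by (intro arg_cong2[where f = "(*)"] A_cong G_cong) auto
  then have "iter_cint r k (\<lambda>\<eta>. F (\<lambda>j. if j \<le> k then \<eta> j else \<xi> j))
      = iter_cint r (Suc m) (\<lambda>\<eta>. A \<eta> * (\<lambda>z. G (\<xi>(k := z))) (\<eta> (Suc m)))"
    by (simp add: k)
  also have "\<dots> = iter_cint r m A * contour_integral (circlepath 0 r) (\<lambda>z. G (\<xi>(k := z)))"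
    by (rule iter_cint_Suc_separated) (rule A_cong, simp add: k)
  also have "\<dots> = 0"
    using vanish[OF bounded] by simp
  finally show "iter_cint r k (\<lambda>\<eta>. F (\<lambda>j. if j \<le> k then \<eta> j else \<xi> j)) = 0" .
qed

lemma quadratic_less_if_below_positive_root:
  fixes p q r :: real
  assumes "0 < q" "0 \<le> r" "0 \<le> p" "r < (-1 + sqrt (1 + 4 * p * q)) / (2 * q)"
  shows "q * r\<^sup>2 + r < p"
proof -
  have "2 * q * r + 1 < sqrt (1 + 4 * p * q)"
    using assms(1,4) by (simp add: field_simps)
  then have "(2 * q * r + 1)\<^sup>2 < (sqrt (1 + 4 * p * q))\<^sup>2"
    by (rule power_strict_mono) (use assms(1,2) in auto)
  also have "\<dots> = 1 + 4 * p * q"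
    using assms(1,3) by simp
  finally have "q * (q * r\<^sup>2 + r) < q * p"
    by (simp add: algebra_simps power2_eq_square)
  then show ?thesis
    using assms(1) by simp
qed

lemma Dden_nonzero:
  assumes "0 \<le> q" "q * r\<^sup>2 + r < p" "norm u \<le> r" "norm v \<le> r"
  shows "Dden p q u v \<noteq> 0"
proof
  assume "Dden p q u v = 0"
  then have "u * (1 - of_real q * v) = of_real p"
    unfolding Dden_def by (simp add: algebra_simps)
  moreover have "0 < p"
    using assms by (smt (verit) mult_nonneg_nonneg norm_ge_zero zero_le_power2)
  ultimately have "p = norm u * norm (1 - of_real q * v)"
    by (metis abs_of_pos norm_mult norm_of_real)
  also have "\<dots> \<le> r * (1 + q * r)"
  proof (rule mult_mono)
    have "norm (1 - of_real q * v) \<le> 1 + norm (of_real q * v)"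
      by (metis norm_one norm_triangle_ineq4)
    also have "\<dots> \<le> 1 + q * r"
      using assms(1,4) by (simp add: norm_mult mult_left_mono)
    finally show "norm (1 - of_real q * v) \<le> 1 + q * r" .
  qed (use assms(3) in \<open>auto intro: order_trans[OF norm_ge_zero]\<close>)
  finally show False
    using assms(2) by (simp add: algebra_simps power2_eq_square)
qed

lemma holomorphic_on_Efac:
  assumes "f holomorphic_on S" "g holomorphic_on S"
    and "\<And>z. z \<in> S \<Longrightarrow> Dden p q (f z) (g z) \<noteq> 0"
  shows "(\<lambda>z. Efac p q c (f z) (g z)) holomorphic_on S"
proof -
  have "(\<lambda>z. Dden p q (f z) (g z)) holomorphic_on S"
    unfolding Dden_def by (intro holomorphic_intros assms)
  then show ?thesis
    using assms by (cases c) (auto simp: Sfac_def Pfac_def Qfac_def Tfac_def intro!: holomorphic_intros)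
qed

lemma contour_integral_inversion_monomial_eq_0:
  assumes "0 \<le> q" "q * r\<^sup>2 + r < p" "\<forall>j. norm (\<xi> j) \<le> r"
    and "\<And>i. i \<in> I \<Longrightarrow> \<sigma> i = k \<Longrightarrow> 0 \<le> e i"
  shows "contour_integral (circlepath 0 r) (\<lambda>z.
           (\<Prod>(\<beta>, \<alpha>)\<in>J. Efac p q (E (\<beta>, \<alpha>)) ((\<xi>(k := z)) \<alpha>) ((\<xi>(k := z)) \<beta>)) *
           (\<Prod>i\<in>I. (\<xi>(k := z)) (\<sigma> i) powi e i)) = 0"
proof -
  have "0 \<le> r" using assms(3) norm_ge_zero order_trans by blast
  have coordinate: "(\<lambda>z. (\<xi>(k := z)) j) holomorphic_on S" for j S
    by (cases "j = k") (auto intro: holomorphic_intros)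
  have "(\<lambda>z. Efac p q c ((\<xi>(k := z)) a) ((\<xi>(k := z)) b)) holomorphic_on cball 0 r" for c a b
    by (rule holomorphic_on_Efac[OF coordinate coordinate], rule Dden_nonzero)
      (use assms(1-3) in auto)
  moreover have "(\<lambda>z. (\<xi>(k := z)) (\<sigma> i) powi e i) holomorphic_on cball 0 r" if "i \<in> I" for i
    using assms(4)[OF that] by (cases "\<sigma> i = k") (auto intro!: holomorphic_intros)
  ultimately have "(\<lambda>z. (\<Prod>(\<beta>, \<alpha>)\<in>J. Efac p q (E (\<beta>, \<alpha>)) ((\<xi>(k := z)) \<alpha>) ((\<xi>(k := z)) \<beta>)) *
           (\<Prod>i\<in>I. (\<xi>(k := z)) (\<sigma> i) powi e i)) holomorphic_on cball 0 r"
    by (intro holomorphic_on_mult holomorphic_on_prod) (auto split: prod.split)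
  then show ?thesis
    by (intro contour_integral_unique Cauchy_theorem_convex_simple) (use \<open>0 \<le> r\<close> in auto)
qed

lemma inj_fixing_below_ge:
  fixes \<sigma> :: "'a::linorder \<Rightarrow> 'a"
  assumes "inj \<sigma>" "\<And>j. j < k \<Longrightarrow> \<sigma> j = j" "k \<le> i"
  shows "k \<le> \<sigma> i"
proof (rule ccontr)
  assume "\<not> k \<le> \<sigma> i"
  then have "\<sigma> (\<sigma> i) = \<sigma> i"
    using assms(2) by simp
  then have "\<sigma> i = i"
    using assms(1) by (simp add: inj_eq)
  with \<open>\<not> k \<le> \<sigma> i\<close> assms(3) show False
    by simp
qed

lemma inversions_fixing_below_ge:
  assumes "inj \<sigma>" "\<And>j. j < k \<Longrightarrow> \<sigma> j = j" "(\<beta>, \<alpha>) \<in> inversions \<sigma> N"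
  shows "k \<le> \<alpha>" "k \<le> \<beta>"
proof -
  obtain i j where ij: "i < j" "\<sigma> i = \<beta>" "\<sigma> j = \<alpha>" "\<alpha> < \<beta>"
    using assms(3) unfolding inversions_def by blast
  then have "k \<le> j"
    using assms(2) by (metis less_trans not_le not_less_iff_gr_or_eq)
  then show "k \<le> \<alpha>"
    using inj_fixing_below_ge[OF assms(1,2)] ij(3) by blast
  then show "k \<le> \<beta>"
    using ij(4) by simp
qed

lemma permutes_least_moved_point:
  fixes \<sigma> :: "nat \<Rightarrow> nat"
  assumes "\<sigma> permutes {1..N}" "\<sigma> \<noteq> id"
  obtains k i where "k \<in> {1..N}" "i \<in> {1..N}" "k < i" "\<sigma> i = k" "\<And>j. j < k \<Longrightarrow> \<sigma> j = j"
proof -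
  define k where "k = (LEAST k. \<sigma> k \<noteq> k)"
  have "\<exists>k. \<sigma> k \<noteq> k"
    using assms(2) by (auto simp: fun_eq_iff)
  then have moved: "\<sigma> k \<noteq> k"
    unfolding k_def by (rule LeastI_ex[where P = "\<lambda>k. \<sigma> k \<noteq> k"])
  have fixed: "\<sigma> j = j" if "j < k" for j
    using that not_less_Least unfolding k_def by blast
  obtain i where i: "\<sigma> i = k"
    using permutes_surj[OF assms(1)] by (metis surjD)
  have "k < i"
    using i moved fixed by (metis not_less_iff_gr_or_eq)
  moreover have "k \<in> {1..N}" "i \<in> {1..N}"
    using moved i \<open>k < i\<close> permutes_not_in[OF assms(1)] by (metis less_irrefl)+
  ultimately show ?thesis
    using that i fixed by blast
qed

lemma iter_cint_inversion_integrand_eq_0: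
  fixes e :: "nat \<Rightarrow> int"
  assumes "0 \<le> q" "q * r\<^sup>2 + r < p" "0 \<le> r"
    and "1 \<le> k" "k \<le> N" "inj \<sigma>" and fixed: "\<And>j. j < k \<Longrightarrow> \<sigma> j = j"
    and "\<And>i. i \<in> {k..N} \<Longrightarrow> \<sigma> i = k \<Longrightarrow> 0 \<le> e i"
  shows "iter_cint r N (\<lambda>\<xi>.
           (\<Prod>(\<beta>, \<alpha>)\<in>inversions \<sigma> N. Efac p q (E (\<beta>, \<alpha>)) (\<xi> \<alpha>) (\<xi> \<beta>)) *
           (\<Prod>i\<in>{1..N}. \<xi> (\<sigma> i) powi e i)) = 0"
proof -
  define A where "A \<xi> = (\<Prod>i\<in>{1..<k}. \<xi> (\<sigma> i) powi e i)" for \<xi> :: "nat \<Rightarrow> complex"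
  define G where "G \<xi> = (\<Prod>(\<beta>, \<alpha>)\<in>inversions \<sigma> N. Efac p q (E (\<beta>, \<alpha>)) (\<xi> \<alpha>) (\<xi> \<beta>)) *
      (\<Prod>i\<in>{k..N}. \<xi> (\<sigma> i) powi e i)" for \<xi> :: "nat \<Rightarrow> complex"
  have "{1..N} = {1..<k} \<union> {k..N}"
    using assms(4,5) by auto
  then have monomial_split:
    "(\<Prod>i\<in>{1..N}. \<xi> (\<sigma> i) powi e i) = A \<xi> * (\<Prod>i\<in>{k..N}. \<xi> (\<sigma> i) powi e i)" for \<xi>
    unfolding A_def by (simp only:) (rule prod.union_disjoint, auto)
  show ?thesis
  proof (rule iter_cint_eq_0_if_separated[of k N r _ A G, OF assms(4,5,3)])
    fix \<xi> :: "nat \<Rightarrow> complex"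
    show "(\<Prod>(\<beta>, \<alpha>)\<in>inversions \<sigma> N. Efac p q (E (\<beta>, \<alpha>)) (\<xi> \<alpha>) (\<xi> \<beta>)) *
        (\<Prod>i\<in>{1..N}. \<xi> (\<sigma> i) powi e i) = A \<xi> * G \<xi>"
      unfolding monomial_split G_def by (simp only: mult_ac)
  next
    fix \<xi> \<xi>' :: "nat \<Rightarrow> complex"
    assume "\<forall>j<k. \<xi> j = \<xi>' j"
    then show "A \<xi> = A \<xi>'"
      unfolding A_def by (intro prod.cong) (auto simp: fixed)
  next
    fix \<xi> \<xi>' :: "nat \<Rightarrow> complex"
    assume "\<forall>j\<ge>k. \<xi> j = \<xi>' j"
    then show "G \<xi> = G \<xi>'"
      unfolding G_def
      using inj_fixing_below_ge[OF assms(6) fixed] inversions_fixing_below_ge[OF assms(6) fixed]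
      by (intro arg_cong2[where f = "(*)"] prod.cong) auto
  next
    fix \<xi> :: "nat \<Rightarrow> complex"
    assume "\<forall>j. norm (\<xi> j) \<le> r"
    then show "contour_integral (circlepath 0 r) (\<lambda>z. G (\<xi>(k := z))) = 0"
      unfolding G_def by (rule contour_integral_inversion_monomial_eq_0[OF assms(1,2)]) (use assms(8) in auto)
  qed
qed

theorem mainTheorem5:
  fixes p q r :: real and N :: nat and x y :: "nat \<Rightarrow> int"
    and \<sigma> :: "nat \<Rightarrow> nat" and E :: "nat \<times> nat \<Rightarrow> echoice"
  assumes "0 < p" and "p < 1" and "q = 1 - p"
    and "0 < r" and "r < (-1 + sqrt (1 + 4 * p * q)) / (2 * q)"
    and "\<forall>i j. 1 \<le> i \<and> i < j \<and> j \<le> N \<longrightarrow> x i < x j"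
    and "\<forall>i j. 1 \<le> i \<and> i < j \<and> j \<le> N \<longrightarrow> y i < y j"
    and "\<forall>i\<in>{1..N}. x i \<ge> y i"
    and "\<sigma> permutes {1..N}" and "\<sigma> \<noteq> id"
  shows "iter_cint r N (\<lambda>\<xi>.
           (\<Prod>(\<beta>, \<alpha>)\<in>inversions \<sigma> N. Efac p q (E (\<beta>, \<alpha>)) (\<xi> \<alpha>) (\<xi> \<beta>)) *
           (\<Prod>i\<in>{1..N}. \<xi> (\<sigma> i) powi (x i - y (\<sigma> i) - 1))) = 0"
proof -
  have "0 < q"
    using assms(2,3) by simp
  then have radius: "q * r\<^sup>2 + r < p"
    using assms(1,4,5) by (intro quadratic_less_if_below_positive_root) auto
  obtain k i0 where k: "k \<in> {1..N}" and i0: "i0 \<in> {1..N}" "k < i0" "\<sigma> i0 = k"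
    and fixed: "\<And>j. j < k \<Longrightarrow> \<sigma> j = j"
    using permutes_least_moved_point[OF assms(9,10)] by blast
  have inj: "inj \<sigma>"
    using assms(9) by (rule permutes_inj)
  have "0 \<le> x i - y (\<sigma> i) - 1" if "\<sigma> i = k" for i
  proof -
    have "i = i0" using that i0(3) inj by (metis injD)
    then show ?thesis
      using that i0 k assms(6,8) by force
  qed
  then show ?thesis
    using k by (intro iter_cint_inversion_integrand_eq_0[OF _ radius _ _ _ inj fixed])
      (use \<open>0 < q\<close> assms(4) in auto)
qed

end
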